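(* Let $a,b\ge 0$ and $n=a+b$. There is a bijection $g:\mathcal Y_{a,b}\to\mathcal Y_{a,b}$ such that for every $P\in\mathcal Y_{a,b}$, $$\mathrm{Peak}(P)=\mathrm{hd}(g(P))\qquad\text{and}\qquad \mathrm{Peak}^*(P)=\mathrm{hd}^*(g(P)).$$
   Context: $\mathcal Y_{a,b}$ is the set of lattice paths with unit steps $N$ and $E$ from $(0,0)$ to $(b,a)$ (so $a$ steps $N$ and $b$ steps $E$); each such path is identified with the Young diagram $\lambda$ fitting in the $a\times b$ rectangle (placed against its upper and left sides) whose southeast boundary is the path. Label the vertices of $P$ by $0,1,\dots,n$ starting from the origin. A peak is an occurrence of consecutive steps $NE$; $\mathrm{Peak}(P)$ is the set of labels of the vertices lying between the $N$ and the $E$ of a peak. $\mathrm{Peak}^*(P)=\mathrm{Peak}(PE)$, where $PE$ is $P$ followed by an extra $E$ step; thus $\mathrm{Peak}^*(P)=\mathrm{Peak}(P)\cup\{n\}$ if $P$ ends with $N$ and $\mathrm{Peak}(P)$ otherwise. The hook decomposition $\mathrm{hd}(P)$ of the diagram $\lambda$ with rows $\lambda_1\ge\lambda_2\ge\cdots$, conjugate $\lambda'$, and Durfee square of side $d$ (largest $d$ with $\lambda_d\ge d$) is the set $\{\lambda_i+\lambda'_i-2i+1: 1\le i\le d\}$, i.e. the sizes of the hooks obtained by successively peeling off the largest hook (first row and first column). $\mathrm{hd}^*(P)=\mathrm{hd}(P)\cup\{n\}$ if $P$ begins with an $N$ step, and $\mathrm{hd}^*(P)=\mathrm{hd}(P)$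 otherwise. *)

theory Defs
  imports Main
begin

text \<open>A lattice path is a list of steps; True = N (north), False = E (east).\<close>

definition Y :: "nat \<Rightarrow> nat \<Rightarrow> bool list set" where
  "Y a b = {P. length P = a + b \<and> count_list P True = a}"

text \<open>Vertices are labelled 0..n; vertex i is reached after the first i steps.
  A peak is steps i (N) and i+1 (E) (0-indexed), the vertex between them has label i+1.\<close>

definition Peak :: "bool list \<Rightarrow> nat set" where
  "Peak P = {i + 1 | i. Suc i < length P \<and> P ! i \<and> \<not> P ! Suc i}"

definition PeakStar :: "bool list \<Rightarrow> nat set" where
  "PeakStar P = Peak (P @ [False])"

text \<open>Young diagram of a path in the a x b rectangle (a = number of N steps):
  row i (1-indexed, from the top) has length equal to the number of E steps
  before the (a+1-i)-th N step; rows beyond a are empty.\<close>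

definition nth_N_pos :: "bool list \<Rightarrow> nat \<Rightarrow> nat" where
  "nth_N_pos P j = (LEAST k. k < length P \<and> P ! k \<and> count_list (take k P) True = j - 1)"

definition row :: "bool list \<Rightarrow> nat \<Rightarrow> nat" where
  "row P i = (let a = count_list P True in
     if 1 \<le> i \<and> i \<le> a then count_list (take (nth_N_pos P (a + 1 - i)) P) False else 0)"

definition col :: "bool list \<Rightarrow> nat \<Rightarrow> nat" where
  "col P j = card {i. 1 \<le> i \<and> i \<le> count_list P True \<and> j \<le> row P i}"

definition durfee :: "bool list \<Rightarrow> nat" where
  "durfee P = Max {d. d \<le> count_list P True \<and> (d = 0 \<or> d \<le> row P d)}"

definition hd_set :: "bool list \<Rightarrow> nat set" where
  "hd_set P = {row P i + col P i + 1 - 2 * i | i. 1 \<le> i \<and> i \<le> durfee P}"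

definition hd_star :: "bool list \<Rightarrow> nat set" where
  "hd_star P = (if P \<noteq> [] \<and> hd P then hd_set P \<union> {length P} else hd_set P)"

end

theory Submission
  imports Defs
begin

text \<open>Record each peak of a path \<open>P\<close> in the \<open>a \<times> b\<close> rectangle by the numbers \<open>(e, n)\<close>
  of E and N steps before it; its label is \<open>e + n\<close>. The peaks form a chain, increasing in
  both coordinates, and they determine \<open>P\<close>. Let \<open>g(P)\<close> be the path whose first \<open>a\<close>
  steps are E exactly at the positions \<open>a - n\<close> and whose last \<open>b\<close> steps are N exactly at
  the positions \<open>a + e\<close>, for the peaks \<open>(e, n)\<close> of \<open>P\<close>. The \<open>i\<close>-th diagonal hook of a
  diagram is the stretch of its boundary path from the E step closing column \<open>i\<close> to the N step
  closing row \<open>i\<close>; for \<open>g(P)\<close> these steps sit at \<open>a - n\<close> and \<open>a + e\<close> for the \<open>i\<close>-th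
  highest height \<open>n\<close> and the \<open>i\<close>-th largest abscissa \<open>e\<close>, which belong to the same peak, so
  the hook has length \<open>e + n\<close>. The starred sets agree because \<open>P\<close> ends with N iff it has no
  peak at height \<open>a\<close> iff \<open>g(P)\<close> starts with N. Since \<open>g\<close> is injective on the finite set
  \<open>Y a b\<close>, it is a bijection.\<close>

definition prefix_count :: "'a \<Rightarrow> 'a list \<Rightarrow> nat \<Rightarrow> nat" where
  "prefix_count x xs k = count_list (take k xs) x"

abbreviation N_before :: "bool list \<Rightarrow> nat \<Rightarrow> nat" where
  "N_before \<equiv> prefix_count True"

abbreviation E_before :: "bool list \<Rightarrow> nat \<Rightarrow> nat" where
  "E_before \<equiv> prefix_count False"

lemma prefix_count_0 [simp]: "prefix_count x xs 0 = 0"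
  by (simp add: prefix_count_def)

lemma prefix_count_Suc:
  "k < length xs \<Longrightarrow> prefix_count x xs (Suc k) = prefix_count x xs k + (if xs ! k = x then 1 else 0)"
  by (simp add: prefix_count_def take_Suc_conv_app_nth)

lemma prefix_count_full: "length xs \<le> k \<Longrightarrow> prefix_count x xs k = count_list xs x"
  by (simp add: prefix_count_def)

lemma prefix_count_mono: "i \<le> j \<Longrightarrow> prefix_count x xs i \<le> prefix_count x xs j"
  unfolding prefix_count_def by (metis count_list_append le_add1 le_add_diff_inverse take_add)

lemma prefix_count_le_count_list: "prefix_count x xs k \<le> count_list xs x"
  by (metis nat_le_linear prefix_count_full prefix_count_mono)

lemma prefix_count_strict_mono:
  "i < j \<Longrightarrow> j \<le> length xs \<Longrightarrow> xs ! i = x \<Longrightarrow> prefix_count x xs i < prefix_count x xs j"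
  using prefix_count_Suc[of i xs x] prefix_count_mono[of "Suc i" j x xs] by simp

lemma prefix_count_inj_on_occurrences:
  assumes "i < length xs" "xs ! i = x" "j < length xs" "xs ! j = x"
    and "prefix_count x xs i = prefix_count x xs j"
  shows "i = j"
  using assms prefix_count_strict_mono[of i j xs x] prefix_count_strict_mono[of j i xs x]
  by (cases i j rule: linorder_cases) auto

lemma prefix_count_attains:
  "j < count_list xs x \<Longrightarrow> \<exists>k < length xs. xs ! k = x \<and> prefix_count x xs k = j"
proof (induction xs arbitrary: j)
  case (Cons y ys)
  show ?case
  proof (cases "y = x \<and> j = 0")
    case True
    then show ?thesis by (intro exI[of _ 0]) simp
  next
    case False
    then have "j - (if y = x then 1 else 0) < count_list ys x"
      using Cons.prems by (auto split: if_splits)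
    then obtain k where "k < length ys" "ys ! k = x"
        "prefix_count x ys k = j - (if y = x then 1 else 0)"
      using Cons.IH by blast
    then show ?thesis
      using False by (intro exI[of _ "Suc k"]) (auto simp: prefix_count_def)
  qed
qed simp

lemma count_list_True_False: "count_list xs True + count_list xs False = length xs"
  by (induction xs) auto

lemma N_before_E_before: "k \<le> length xs \<Longrightarrow> N_before xs k + E_before xs k = k"
  using count_list_True_False[of "take k xs"] by (simp add: prefix_count_def)

lemma Y_counts: "Q \<in> Y a b \<Longrightarrow> length Q = a + b \<and> count_list Q True = a \<and> count_list Q False = b"
  unfolding Y_def using count_list_True_False[of Q] by auto

lemma nth_N_pos_eq:
  assumes "k < length Q" "Q ! k" "N_before Q k = j - 1"
  shows "nth_N_pos Q j = k"
  unfolding nth_N_pos_def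
proof (rule Least_equality)
  fix k' assume "k' < length Q \<and> Q ! k' \<and> count_list (take k' Q) True = j - 1"
  then show "k \<le> k'"
    using prefix_count_inj_on_occurrences[of k' Q True k] assms by (simp add: prefix_count_def)
qed (use assms in \<open>simp add: prefix_count_def\<close>)

lemma row_eq_E_before:
  assumes Q: "Q \<in> Y a b" and i: "1 \<le> i" "i \<le> a"
    and p: "p < length Q" "Q ! p" "N_before Q p = a - i"
  shows "row Q i = E_before Q p"
proof -
  have "nth_N_pos Q (a + 1 - i) = p" using nth_N_pos_eq[OF p(1,2)] p(3) by simp
  then show ?thesis using Y_counts[OF Q] i by (simp add: row_def prefix_count_def Let_def)
qed

lemma row_end_exists:
  assumes "Q \<in> Y a b" "1 \<le> i" "i \<le> a"
  shows "\<exists>p < length Q. Q ! p \<and> N_before Q p = a - i"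
  using prefix_count_attains[of "a - i" Q True] Y_counts[OF assms(1)] assms(2,3) by auto

lemma col_eq:
  assumes Q: "Q \<in> Y a b" and j: "1 \<le> j"
    and q: "q < length Q" "\<not> Q ! q" "E_before Q q = j - 1"
  shows "col Q j = a - N_before Q q"
proof -
  have "{i. 1 \<le> i \<and> i \<le> count_list Q True \<and> j \<le> row Q i} = {1..a - N_before Q q}"
  proof (intro set_eqI iffI)
    fix i assume "i \<in> {i. 1 \<le> i \<and> i \<le> count_list Q True \<and> j \<le> row Q i}"
    then have i: "1 \<le> i" "i \<le> a" "j \<le> row Q i" using Y_counts[OF Q] by auto
    obtain p where p: "p < length Q" "Q ! p" "N_before Q p = a - i"
      using row_end_exists[OF Q i(1,2)] by blast
    have "q < p"
      using prefix_count_mono[of p q False Q] row_eq_E_before[OF Q i(1,2) p] i q j by linarith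
    then have "N_before Q (Suc q) \<le> N_before Q p" by (intro prefix_count_mono) simp
    then show "i \<in> {1..a - N_before Q q}" using prefix_count_Suc[OF q(1)] q(2) p i by simp
  next
    fix i assume "i \<in> {1..a - N_before Q q}"
    then have i: "1 \<le> i" "i \<le> a" "i \<le> a - N_before Q q" by auto
    obtain p where p: "p < length Q" "Q ! p" "N_before Q p = a - i"
      using row_end_exists[OF Q i(1,2)] by blast
    have "q < p"
      proof (rule ccontr)
      assume "\<not> q < p"
      then have "p < q" using p q by (metis linorder_neqE_nat)
      then show False using prefix_count_strict_mono[of p q Q True] p q i by simp
    qed
    then have "E_before Q (Suc q) \<le> E_before Q p" by (intro prefix_count_mono) simp
    then have "j \<le> row Q i"
      using prefix_count_Suc[OF q(1)] q j row_eq_E_before[OF Q i(1,2) p] by simp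
    then show "i \<in> {i. 1 \<le> i \<and> i \<le> count_list Q True \<and> j \<le> row Q i}"
      using i Y_counts[OF Q] by simp
  qed
  then show ?thesis unfolding col_def by simp
qed

lemma row_antimono:
  assumes Q: "Q \<in> Y a b" and "1 \<le> i" "i \<le> j" "j \<le> a"
  shows "row Q j \<le> row Q i"
proof -
  obtain p where p: "p < length Q" "Q ! p" "N_before Q p = a - i"
    using row_end_exists[OF Q, of i] assms by auto
  obtain p' where p': "p' < length Q" "Q ! p'" "N_before Q p' = a - j"
    using row_end_exists[OF Q, of j] assms by auto
  have "p' \<le> p"
    using prefix_count_strict_mono[of p p' Q True] p p' assms by fastforce
  then show ?thesis
    using row_eq_E_before[OF Q _ _ p] row_eq_E_before[OF Q _ _ p'] prefix_count_mono assms by simp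
qed

lemma le_durfee_iff:
  assumes Q: "Q \<in> Y a b" and i: "1 \<le> i"
  shows "i \<le> durfee Q \<longleftrightarrow> i \<le> a \<and> i \<le> row Q i"
proof -
  define S where "S = {d. d \<le> count_list Q True \<and> (d = 0 \<or> d \<le> row Q d)}"
  have fin: "finite S" unfolding S_def by (rule finite_subset[of _ "{..count_list Q True}"]) auto
  have "0 \<in> S" unfolding S_def by simp
  then have "durfee Q \<in> S" unfolding durfee_def S_def[symmetric] using fin Max_in by blast
  then have "i \<le> durfee Q \<Longrightarrow> i \<le> a \<and> i \<le> row Q i"
    using row_antimono[OF Q i, of "durfee Q"] Y_counts[OF Q] i unfolding S_def by auto
  moreover have "i \<le> durfee Q" if "i \<le> a \<and> i \<le> row Q i"
  proof -
    have "i \<in> S" using that Y_counts[OF Q] unfolding S_def by simp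
    then show ?thesis unfolding durfee_def S_def[symmetric] using fin by simp
  qed
  ultimately show ?thesis by blast
qed

text \<open>The hook of the \<open>i\<close>-th diagonal cell ends at the N step \<open>p\<close> closing row \<open>i\<close>
  and at the E step \<open>q\<close> closing column \<open>i\<close>; the steps of the path between them trace
  its rim, so its length is \<open>p - q\<close>.\<close>

definition diagonal_hooks :: "nat \<Rightarrow> nat \<Rightarrow> bool list \<Rightarrow> nat set" where
  "diagonal_hooks a b Q = {p - q | p q. q < a \<and> a \<le> p \<and> p < a + b \<and> Q ! p \<and> \<not> Q ! q \<and>
     N_before Q p + E_before Q q + 1 = a}"

lemma hd_set_subset_diagonal_hooks:
  assumes Q: "Q \<in> Y a b"
  shows "hd_set Q \<subseteq> diagonal_hooks a b Q"
proof
  note counts = Y_counts[OF Q]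
  fix x assume "x \<in> hd_set Q"
  then obtain i where x: "x = row Q i + col Q i + 1 - 2 * i" and i: "1 \<le> i" "i \<le> durfee Q"
    unfolding hd_set_def by auto
  have i': "i \<le> a" "i \<le> row Q i" using le_durfee_iff[OF Q i(1)] i by auto
  obtain p where p: "p < length Q" "Q ! p" "N_before Q p = a - i"
    using row_end_exists[OF Q i(1) i'(1)] by blast
  have row: "row Q i = E_before Q p" by (rule row_eq_E_before[OF Q i(1) i'(1) p])
  have "E_before Q p \<le> b" using prefix_count_le_count_list[of False Q p] counts by simp
  then obtain q where q: "q < length Q" "\<not> Q ! q" "E_before Q q = i - 1"
    using prefix_count_attains[of "i - 1" Q False] counts i i' row by force
  have "q < p"
    using prefix_count_mono[of p q False Q] row i' q i by linarith
  then have "N_before Q q \<le> N_before Q p" by (intro prefix_count_mono) simp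
  moreover have "col Q i = a - N_before Q q" by (rule col_eq[OF Q i(1) q])
  moreover have "N_before Q p + E_before Q p = p" "N_before Q q + E_before Q q = q"
    using N_before_E_before[of p Q] N_before_E_before[of q Q] p(1) q(1) by simp_all
  ultimately have "x = p - q" "q < a" "a \<le> p" "N_before Q p + E_before Q q + 1 = a"
    using x row p q i i' by auto
  then show "x \<in> diagonal_hooks a b Q"
    unfolding diagonal_hooks_def using p q counts by (intro CollectI exI[of _ p] exI[of _ q]) simp
qed

lemma diagonal_hooks_subset_hd_set:
  assumes Q: "Q \<in> Y a b"
  shows "diagonal_hooks a b Q \<subseteq> hd_set Q"
proof
  note counts = Y_counts[OF Q]
  fix x assume "x \<in> diagonal_hooks a b Q"
  then obtain p q where x: "x = p - q" and pq: "q < a" "a \<le> p" "p < a + b" "Q ! p" "\<not> Q ! q"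
      "N_before Q p + E_before Q q + 1 = a"
    unfolding diagonal_hooks_def by blast
  define i where "i = a - N_before Q p"
  have i: "1 \<le> i" "i \<le> a" "N_before Q p = a - i" "E_before Q q = i - 1"
    using pq(6) unfolding i_def by auto
  have len: "p < length Q" "q < length Q" using pq counts by auto
  have row: "row Q i = E_before Q p" by (rule row_eq_E_before[OF Q i(1,2) len(1) pq(4) i(3)])
  have col: "col Q i = a - N_before Q q" by (rule col_eq[OF Q i(1) len(2) pq(5) i(4)])
  have sums: "N_before Q p + E_before Q p = p" "N_before Q q + E_before Q q = q"
    using N_before_E_before[of p Q] N_before_E_before[of q Q] len by simp_all
  then have "i \<le> row Q i" using row pq(2) i_def len by simp
  then have "i \<le> durfee Q" using le_durfee_iff[OF Q i(1)] i by simp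
  moreover have "x = row Q i + col Q i + 1 - 2 * i"
    using x row col i pq(6) sums prefix_count_le_count_list[of True Q q] counts by linarith
  ultimately show "x \<in> hd_set Q" unfolding hd_set_def using i(1) by blast
qed

lemma hd_set_eq_diagonal_hooks: "Q \<in> Y a b \<Longrightarrow> hd_set Q = diagonal_hooks a b Q"
  using hd_set_subset_diagonal_hooks diagonal_hooks_subset_hd_set by blast

definition peak_points :: "bool list \<Rightarrow> (nat \<times> nat) set" where
  "peak_points P = {(E_before P (Suc i), N_before P (Suc i)) | i.
     Suc i < length P \<and> P ! i \<and> \<not> P ! Suc i}"

lemma Peak_eq_peak_points: "Peak P = (\<lambda>(e, n). e + n) ` peak_points P"
proof -
  have "Suc i < length P \<Longrightarrow> E_before P (Suc i) + N_before P (Suc i) = Suc i" for i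
    using N_before_E_before[of "Suc i" P] by simp
  then show ?thesis unfolding Peak_def peak_points_def by (auto simp: image_iff; metis)
qed

lemma finite_peak_points: "finite (peak_points P)"
proof -
  have "peak_points P \<subseteq> (\<lambda>i. (E_before P (Suc i), N_before P (Suc i))) ` {..<length P}"
    unfolding peak_points_def by auto
  then show ?thesis using finite_surj by blast
qed

lemma peak_points_bounds:
  assumes P: "P \<in> Y a b" and v: "v \<in> peak_points P"
  shows "fst v < b \<and> 1 \<le> snd v \<and> snd v \<le> a"
proof -
  obtain i where i: "v = (E_before P (Suc i), N_before P (Suc i))"
      "Suc i < length P" "P ! i" "\<not> P ! Suc i"
    using v unfolding peak_points_def by blast
  have "E_before P (Suc i) < E_before P (Suc (Suc i))" using prefix_count_Suc[OF i(2)] i by simp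
  moreover have "E_before P (Suc (Suc i)) \<le> b" "N_before P (Suc i) \<le> a"
    using prefix_count_le_count_list Y_counts[OF P] by metis+
  moreover have "1 \<le> N_before P (Suc i)" using prefix_count_Suc[of i P True] i by simp
  ultimately show ?thesis using i by simp
qed

lemma peak_points_strict_mono:
  assumes i: "Suc i < length P" "P ! i" "\<not> P ! Suc i"
    and j: "Suc j < length P" "P ! j" "\<not> P ! Suc j" and "i < j"
  shows "E_before P (Suc i) < E_before P (Suc j) \<and> N_before P (Suc i) < N_before P (Suc j)"
proof
  show "E_before P (Suc i) < E_before P (Suc j)"
    using prefix_count_strict_mono[of "Suc i" "Suc j" P False] assms by simp
  have "Suc i \<noteq> j" using i j by auto
  then have "N_before P (Suc i) \<le> N_before P j" using \<open>i < j\<close> by (intro prefix_count_mono) simp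
  then show "N_before P (Suc i) < N_before P (Suc j)" using prefix_count_Suc[of j P True] j by simp
qed

lemma peak_points_chain:
  assumes "v \<in> peak_points P" "w \<in> peak_points P"
  shows "(fst v < fst w \<longleftrightarrow> snd v < snd w) \<and> (fst v = fst w \<longleftrightarrow> v = w) \<and> (snd v = snd w \<longleftrightarrow> v = w)"
proof -
  obtain i where i: "v = (E_before P (Suc i), N_before P (Suc i))"
      "Suc i < length P" "P ! i" "\<not> P ! Suc i"
    using assms(1) unfolding peak_points_def by blast
  obtain j where j: "w = (E_before P (Suc j), N_before P (Suc j))"
      "Suc j < length P" "P ! j" "\<not> P ! Suc j"
    using assms(2) unfolding peak_points_def by blast
  show ?thesis
    using peak_points_strict_mono[OF i(2-4) j(2-4)] peak_points_strict_mono[OF j(2-4) i(2-4)] i j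
    by (cases i j rule: linorder_cases) auto
qed

lemma inj_on_fst_peak_points: "inj_on fst (peak_points P)"
  and inj_on_snd_peak_points: "inj_on snd (peak_points P)"
  unfolding inj_on_def by (metis peak_points_chain)+

lemma card_peak_points_coordinates: "card (fst ` peak_points P) = card (snd ` peak_points P)"
  using card_image[OF inj_on_fst_peak_points] card_image[OF inj_on_snd_peak_points] by simp

lemma peak_points_rank:
  assumes v: "v \<in> peak_points P"
  shows "card {e \<in> fst ` peak_points P. fst v < e} = card {n \<in> snd ` peak_points P. snd v < n}"
proof -
  let ?W = "{w \<in> peak_points P. fst v < fst w}"
  have "{e \<in> fst ` peak_points P. fst v < e} = fst ` ?W" by auto
  moreover have "{n \<in> snd ` peak_points P. snd v < n} = snd ` ?W" using peak_points_chain[OF v] by auto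
  moreover have "card (fst ` ?W) = card ?W" "card (snd ` ?W) = card ?W"
    by (auto intro!: card_image inj_on_subset[OF inj_on_fst_peak_points]
        inj_on_subset[OF inj_on_snd_peak_points])
  ultimately show ?thesis by simp
qed

lemma card_greater_inj:
  fixes x y :: "'a :: linorder"
  assumes "finite S" "x \<in> S" "y \<in> S" "card {s \<in> S. x < s} = card {s \<in> S. y < s}"
  shows "x = y"
proof -
  have less: "card {s \<in> S. v < s} < card {s \<in> S. u < s}" if "u < v" "v \<in> S" for u v
    using that assms(1) by (intro psubset_card_mono) auto
  show ?thesis using less[of x y] less[of y x] assms by (cases x y rule: linorder_cases) auto
qed

text \<open>A chain is determined by its two coordinate sets: its \<open>k\<close>-th largest first
  coordinate is paired with its \<open>k\<close>-th largest second coordinate.\<close>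

lemma peak_points_eq_rank_pairs:
  "peak_points P = {(e, n). e \<in> fst ` peak_points P \<and> n \<in> snd ` peak_points P \<and>
     card {e' \<in> fst ` peak_points P. e < e'} = card {n' \<in> snd ` peak_points P. n < n'}}"
    (is "_ = ?R")
proof
  show "peak_points P \<subseteq> ?R" using peak_points_rank by (force simp: image_iff)
next
  show "?R \<subseteq> peak_points P"
  proof
    fix v assume "v \<in> ?R"
    then obtain e n where v: "v = (e, n)" and e: "e \<in> fst ` peak_points P"
      and n: "n \<in> snd ` peak_points P"
      and rank: "card {e' \<in> fst ` peak_points P. e < e'} = card {n' \<in> snd ` peak_points P. n < n'}"
      by blast
    obtain w where w: "w \<in> peak_points P" "fst w = e" using e by auto
    have "snd w = n"
      using card_greater_inj[of "snd ` peak_points P" "snd w" n] peak_points_rank[OF w(1)]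
        finite_peak_points w n rank by auto
    then show "v \<in> peak_points P" using w v by (metis prod.collapse)
  qed
qed

text \<open>The first E step after an N step ends a run of N steps, and so creates a peak straight
  above it.\<close>

lemma peak_above_N_step:
  assumes P: "P \<in> Y a b" and i: "i < length P" "P ! i" and "E_before P i \<noteq> b"
  shows "\<exists>y > N_before P i. (E_before P i, y) \<in> peak_points P"
proof -
  have "E_before P i < count_list P False"
    using assms prefix_count_le_count_list[of False P i] Y_counts[OF P] by simp
  then obtain j where j: "j < length P" "\<not> P ! j" "E_before P j = E_before P i"
    using prefix_count_attains[of "E_before P i" P False] by blast
  have "\<not> j < i"
  proof
    assume "j < i"
    then show False using prefix_count_strict_mono[of j i P False] j i by simp
  qed
  moreover have "j \<noteq> i" using j i by auto
  ultimately have "i < j" by simp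
  define k where "k = j - 1"
  have k: "j = Suc k" "i \<le> k" using \<open>i < j\<close> by (simp_all add: k_def)
  have "P ! k"
  proof (rule ccontr)
    assume "\<not> P ! k"
    then have "E_before P k < E_before P j" using prefix_count_strict_mono[of k j P False] j k by simp
    moreover have "E_before P i \<le> E_before P k" using k by (intro prefix_count_mono)
    ultimately show False using j by simp
  qed
  then have "(E_before P j, N_before P j) \<in> peak_points P"
    unfolding peak_points_def using j k by (intro CollectI exI[of _ k]) simp
  moreover have "N_before P i < N_before P j"
    using prefix_count_strict_mono[of i j P True] \<open>i < j\<close> j i by simp
  ultimately show ?thesis using j by auto
qed

lemma no_peak_above_E_step:
  assumes i: "i < length P" "\<not> P ! i" and peak: "(E_before P i, y) \<in> peak_points P"
  shows "y \<le> N_before P i"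
proof -
  obtain k where k: "E_before P (Suc k) = E_before P i" "N_before P (Suc k) = y"
      "Suc k < length P" "P ! k"
    using peak unfolding peak_points_def by auto
  have "\<not> Suc i \<le> Suc k"
  proof
    assume "Suc i \<le> Suc k"
    then show False
      using prefix_count_mono[of "Suc i" "Suc k" False P] prefix_count_Suc[OF i(1), of False] i k by simp
  qed
  then have "Suc k \<le> i" using k i by (cases "k = i") auto
  then show ?thesis using prefix_count_mono[of "Suc k" i True P] k by simp
qed

lemma nth_iff_peak_points:
  assumes P: "P \<in> Y a b" and i: "i < length P"
  shows "P ! i \<longleftrightarrow> E_before P i = b \<or> (\<exists>y > N_before P i. (E_before P i, y) \<in> peak_points P)"
proof
  assume "P ! i"
  then show "E_before P i = b \<or> (\<exists>y > N_before P i. (E_before P i, y) \<in> peak_points P)"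
    using peak_above_N_step[OF P i] by blast
next
  assume h: "E_before P i = b \<or> (\<exists>y > N_before P i. (E_before P i, y) \<in> peak_points P)"
  show "P ! i"
  proof (rule ccontr)
    assume E: "\<not> P ! i"
    then have "E_before P (Suc i) = E_before P i + 1" using prefix_count_Suc[OF i] by simp
    moreover have "E_before P (Suc i) \<le> b"
      using prefix_count_le_count_list Y_counts[OF P] by metis
    ultimately show False using h no_peak_above_E_step[OF i E] by fastforce
  qed
qed

lemma peak_points_inj_on_Y: "inj_on peak_points (Y a b)"
proof (rule inj_onI)
  fix P P' assume P: "P \<in> Y a b" and P': "P' \<in> Y a b" and eq: "peak_points P = peak_points P'"
  have len: "length P = a + b" "length P' = a + b" using Y_counts[OF P] Y_counts[OF P'] by auto
  have "take i P = take i P'" if "i \<le> a + b" for i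
    using that
  proof (induction i)
    case (Suc i)
    then have i: "i < length P" "i < length P'" using len by auto
    have prefix: "take i P = take i P'" using Suc by simp
    then have "prefix_count x P i = prefix_count x P' i" for x by (simp add: prefix_count_def)
    then have "P ! i = P' ! i"
      using nth_iff_peak_points[OF P i(1)] nth_iff_peak_points[OF P' i(2)] eq by simp
    then show ?case using prefix i by (simp add: take_Suc_conv_app_nth)
  qed simp
  from this[of "a + b"] show "P = P'" using len by simp
qed

lemma last_iff_no_top_peak:
  assumes P: "P \<in> Y a b" and a: "0 < a"
  shows "P \<noteq> [] \<and> last P \<longleftrightarrow> a \<notin> snd ` peak_points P"
proof
  assume last: "P \<noteq> [] \<and> last P"
  then have Pl: "P ! (length P - 1)" by (metis last_conv_nth)
  show "a \<notin> snd ` peak_points P"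
  proof
    assume "a \<in> snd ` peak_points P"
    then obtain i where i: "N_before P (Suc i) = a" "Suc i < length P" "\<not> P ! Suc i"
      unfolding peak_points_def by auto
    have "Suc i < length P - 1" using i Pl by (cases "Suc i = length P - 1") auto
    then have "N_before P (Suc i) < N_before P (length P)"
      using prefix_count_mono[of "Suc i" "length P - 1" True P]
        prefix_count_strict_mono[of "length P - 1" "length P" P True] Pl last by simp
    then show False using prefix_count_full[of P "length P"] Y_counts[OF P] i by simp
  qed
next
  assume no_top: "a \<notin> snd ` peak_points P"
  obtain k where k: "k < length P" "P ! k" "N_before P k = a - 1"
    using prefix_count_attains[of "a - 1" P True] Y_counts[OF P] a by auto
  have top: "N_before P (Suc k) = a" using prefix_count_Suc[OF k(1)] k a by simp
  have "\<not> Suc k < length P"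
  proof
    assume sk: "Suc k < length P"
    have "\<not> P ! Suc k"
      using prefix_count_Suc[OF sk, of True] prefix_count_le_count_list[of True P "Suc (Suc k)"]
        Y_counts[OF P] top by auto
    then have "(E_before P (Suc k), N_before P (Suc k)) \<in> peak_points P"
      unfolding peak_points_def using sk k by blast
    then show False using no_top top by (metis image_eqI snd_conv)
  qed
  then have "k = length P - 1" "P \<noteq> []" using k by auto
  then show "P \<noteq> [] \<and> last P" using k by (simp add: last_conv_nth)
qed

lemma Peak_snoc_False:
  "Peak (P @ [False]) = Peak P \<union> (if P \<noteq> [] \<and> last P then {length P} else {})"
proof (intro set_eqI iffI)
  fix x assume "x \<in> Peak (P @ [False])"
  then obtain i where i: "x = i + 1" "Suc i < length P + 1" "(P @ [False]) ! i"
      "\<not> (P @ [False]) ! Suc i"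
    unfolding Peak_def by auto
  show "x \<in> Peak P \<union> (if P \<noteq> [] \<and> last P then {length P} else {})"
  proof (cases "Suc i < length P")
    case True
    then show ?thesis using i unfolding Peak_def by (auto simp: nth_append)
  next
    case False
    then have "Suc i = length P" "P \<noteq> []" using i by auto
    then have "last P = P ! i" by (metis diff_Suc_1 last_conv_nth)
    then show ?thesis using i \<open>Suc i = length P\<close> by (auto simp: nth_append)
  qed
next
  fix x assume "x \<in> Peak P \<union> (if P \<noteq> [] \<and> last P then {length P} else {})"
  then consider "x \<in> Peak P" | "P \<noteq> [] \<and> last P" "x = length P" by (auto split: if_splits)
  then show "x \<in> Peak (P @ [False])"
  proof cases
    case 1
    then show ?thesis unfolding Peak_def by (auto simp: nth_append)
  next
    case 2
    then show ?thesis unfolding Peak_def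
      by (intro CollectI exI[of _ "length P - 1"]) (auto simp: nth_append last_conv_nth)
  qed
qed

lemma prefix_count_append_le:
  "k \<le> length xs \<Longrightarrow> prefix_count x (xs @ ys) k = prefix_count x xs k"
  by (simp add: prefix_count_def)

lemma prefix_count_append_ge:
  "length xs \<le> k \<Longrightarrow> prefix_count x (xs @ ys) k = count_list xs x + prefix_count x ys (k - length xs)"
  by (simp add: prefix_count_def)

lemma count_list_map_upt: "count_list (map f [0..<M]) v = card {m. m < M \<and> f m = v}"
proof (induction M)
  case (Suc M)
  have "{m. m < Suc M \<and> f m = v} = {m. m < M \<and> f m = v} \<union> (if f M = v then {M} else {})"
    by (auto simp: less_Suc_eq)
  then show ?case using Suc by auto
qed simp

lemma prefix_count_map_upt:
  "k \<le> M \<Longrightarrow> prefix_count v (map f [0..<M]) k = card {m. m < k \<and> f m = v}"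
  by (simp add: prefix_count_def take_map count_list_map_upt)

lemma card_reflected_prefix:
  fixes a q :: nat
  assumes "N \<subseteq> {1..a}" "q \<le> a"
  shows "card {m. m < q \<and> a - m \<in> N} = card {n \<in> N. a - q < n}"
proof -
  have "{m. m < q \<and> a - m \<in> N} = (\<lambda>n. a - n) ` {n \<in> N. a - q < n}"
  proof (intro set_eqI iffI)
    fix m assume "m \<in> {m. m < q \<and> a - m \<in> N}"
    then show "m \<in> (\<lambda>n. a - n) ` {n \<in> N. a - q < n}"
      using assms(2) by (intro rev_image_eqI[of "a - m"]) auto
  qed (use assms in auto)
  moreover have "inj_on (\<lambda>n. a - n) {n \<in> N. a - q < n}"
    using assms(1) by (auto simp: inj_on_def subset_iff) (metis diff_diff_cancel)
  ultimately show ?thesis by (simp add: card_image)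
qed

lemma card_less_plus_greater:
  fixes e :: "'a :: linorder"
  assumes "finite S" "e \<in> S"
  shows "card S = card {x \<in> S. x < e} + 1 + card {x \<in> S. e < x}"
proof -
  have "S = {x \<in> S. x < e} \<union> {e} \<union> {x \<in> S. e < x}" using assms by auto
  moreover have "card ({x \<in> S. x < e} \<union> {e} \<union> {x \<in> S. e < x}) =
      card {x \<in> S. x < e} + card {e} + card {x \<in> S. e < x}"
    using assms(1) by (subst card_Un_disjoint; auto)+
  ultimately show ?thesis by simp
qed

definition hook_path :: "nat \<Rightarrow> nat \<Rightarrow> bool list \<Rightarrow> bool list" where
  "hook_path a b P = map (\<lambda>m. a - m \<notin> snd ` peak_points P) [0..<a]
                     @ map (\<lambda>e. e \<in> fst ` peak_points P) [0..<b]"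

lemma length_hook_path [simp]: "length (hook_path a b P) = a + b"
  by (simp add: hook_path_def)

lemma nth_hook_path_low: "m < a \<Longrightarrow> hook_path a b P ! m \<longleftrightarrow> a - m \<notin> snd ` peak_points P"
  by (simp add: hook_path_def nth_append)

lemma nth_hook_path_high: "e < b \<Longrightarrow> hook_path a b P ! (a + e) \<longleftrightarrow> e \<in> fst ` peak_points P"
  by (simp add: hook_path_def nth_append)

lemma peak_heights_subset:
  "P \<in> Y a b \<Longrightarrow> snd ` peak_points P \<subseteq> {1..a}"
  using peak_points_bounds by fastforce

lemma peak_abscissae_subset:
  "P \<in> Y a b \<Longrightarrow> fst ` peak_points P \<subseteq> {..<b}"
  using peak_points_bounds by fastforce

lemma E_before_hook_path:
  assumes P: "P \<in> Y a b" and "q \<le> a"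
  shows "E_before (hook_path a b P) q = card {n \<in> snd ` peak_points P. a - q < n}"
  using assms card_reflected_prefix[OF peak_heights_subset[OF P]]
  by (simp add: hook_path_def prefix_count_append_le prefix_count_map_upt)

lemma N_before_hook_path:
  assumes P: "P \<in> Y a b" and "a \<le> p" "p \<le> a + b"
  shows "N_before (hook_path a b P) p =
    a - card (snd ` peak_points P) + card {e \<in> fst ` peak_points P. e < p - a}"
proof -
  let ?N = "snd ` peak_points P"
  have "{m. m < a \<and> a - m \<notin> ?N} = {..<a} - {m. m < a \<and> a - m \<in> ?N}" by auto
  moreover have "{n \<in> ?N. a - a < n} = ?N" using peak_heights_subset[OF P] by auto
  then have "card {m. m < a \<and> a - m \<in> ?N} = card ?N"
    using card_reflected_prefix[OF peak_heights_subset[OF P], of a] by simp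
  ultimately have "card {m. m < a \<and> a - m \<notin> ?N} = a - card ?N"
    by (simp add: card_Diff_subset subset_eq)
  moreover have "{e. e < p - a \<and> e \<in> fst ` peak_points P} = {e \<in> fst ` peak_points P. e < p - a}"
    by auto
  ultimately show ?thesis
    using assms by (simp add: hook_path_def prefix_count_append_ge prefix_count_map_upt count_list_map_upt)
qed

lemma card_peak_heights_le: "P \<in> Y a b \<Longrightarrow> card (snd ` peak_points P) \<le> a"
  using card_mono[OF _ peak_heights_subset] by fastforce

lemma hook_path_in_Y:
  assumes P: "P \<in> Y a b"
  shows "hook_path a b P \<in> Y a b"
proof -
  have "{e \<in> fst ` peak_points P. e < a + b - a} = fst ` peak_points P"
    using peak_abscissae_subset[OF P] by auto
  then have "N_before (hook_path a b P) (a + b) = a"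
    using N_before_hook_path[OF P, of "a + b"] card_peak_points_coordinates[of P]
      card_peak_heights_le[OF P] by simp
  then show ?thesis unfolding Y_def by (simp add: prefix_count_full)
qed

lemma peak_points_iff_rank_sum:
  assumes e: "e \<in> fst ` peak_points P" and n: "n \<in> snd ` peak_points P"
  shows "(e, n) \<in> peak_points P \<longleftrightarrow>
    card {e' \<in> fst ` peak_points P. e' < e} + card {n' \<in> snd ` peak_points P. n < n'} + 1
      = card (snd ` peak_points P)"
proof -
  have "(e, n) \<in> peak_points P \<longleftrightarrow>
      card {e' \<in> fst ` peak_points P. e < e'} = card {n' \<in> snd ` peak_points P. n < n'}"
  proof
    assume "(e, n) \<in> peak_points P"
    then show "card {e' \<in> fst ` peak_points P. e < e'} = card {n' \<in> snd ` peak_points P. n < n'}"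
      using peak_points_rank by fastforce
  qed (use peak_points_eq_rank_pairs[of P] e n in blast)
  moreover have "card (fst ` peak_points P) =
      card {e' \<in> fst ` peak_points P. e' < e} + 1 + card {e' \<in> fst ` peak_points P. e < e'}"
    using card_less_plus_greater[OF finite_imageI[OF finite_peak_points] e] .
  ultimately show ?thesis using card_peak_points_coordinates[of P] by linarith
qed

lemma diagonal_hook_iff_peak:
  assumes P: "P \<in> Y a b" and "e < b" "1 \<le> n" "n \<le> a"
  defines "Q \<equiv> hook_path a b P"
  shows "Q ! (a + e) \<and> \<not> Q ! (a - n) \<and> N_before Q (a + e) + E_before Q (a - n) + 1 = a
    \<longleftrightarrow> (e, n) \<in> peak_points P"
proof -
  let ?E = "fst ` peak_points P" and ?N = "snd ` peak_points P"
  have "Q ! (a + e) \<longleftrightarrow> e \<in> ?E"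
    using nth_hook_path_high assms unfolding Q_def by blast
  moreover have "\<not> Q ! (a - n) \<longleftrightarrow> n \<in> ?N"
    using nth_hook_path_low[of "a - n" a b P] assms unfolding Q_def by simp
  moreover have "N_before Q (a + e) + E_before Q (a - n) + 1 = a \<longleftrightarrow>
      card {e' \<in> ?E. e' < e} + card {n' \<in> ?N. n < n'} + 1 = card ?N"
    using N_before_hook_path[OF P, of "a + e"] E_before_hook_path[OF P, of "a - n"]
      card_peak_heights_le[OF P] assms unfolding Q_def by (simp, arith)
  moreover have "(e, n) \<in> peak_points P \<Longrightarrow> e \<in> ?E \<and> n \<in> ?N"
    by (metis fst_conv snd_conv image_eqI)
  ultimately show ?thesis using peak_points_iff_rank_sum[of e P n] by blast
qed

lemma hd_set_hook_path:
  assumes P: "P \<in> Y a b"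
  shows "hd_set (hook_path a b P) = Peak P"
proof -
  let ?Q = "hook_path a b P"
  have "diagonal_hooks a b ?Q = Peak P"
  proof (intro set_eqI iffI)
    fix x assume "x \<in> diagonal_hooks a b ?Q"
    then obtain p q where x: "x = p - q" and pq: "q < a" "a \<le> p" "p < a + b" "?Q ! p" "\<not> ?Q ! q"
        "N_before ?Q p + E_before ?Q q + 1 = a"
      unfolding diagonal_hooks_def by blast
    have "a + (p - a) = p" "a - (a - q) = q" using pq by simp_all
    then have "(p - a, a - q) \<in> peak_points P"
      using diagonal_hook_iff_peak[OF P, of "p - a" "a - q"] pq by simp
    moreover have "x = (\<lambda>(e, n). e + n) (p - a, a - q)" using x pq by simp
    ultimately show "x \<in> Peak P" unfolding Peak_eq_peak_points by (rule rev_image_eqI)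
  next
    fix x assume "x \<in> Peak P"
    then obtain e n where en: "(e, n) \<in> peak_points P" "x = e + n"
      unfolding Peak_eq_peak_points by auto
    then have bounds: "e < b" "1 \<le> n" "n \<le> a" using peak_points_bounds[OF P, of "(e, n)"] by simp_all
    have "?Q ! (a + e) \<and> \<not> ?Q ! (a - n) \<and> N_before ?Q (a + e) + E_before ?Q (a - n) + 1 = a"
      using diagonal_hook_iff_peak[OF P bounds] en(1) by blast
    moreover have "x = (a + e) - (a - n)" using en bounds by simp
    ultimately show "x \<in> diagonal_hooks a b ?Q"
      unfolding diagonal_hooks_def using bounds
      by (intro CollectI exI[of _ "a + e"] exI[of _ "a - n"]) simp
  qed
  then show ?thesis using hd_set_eq_diagonal_hooks[OF hook_path_in_Y[OF P]] by simp
qed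

lemma peak_abscissae_from_hook_path:
  assumes P: "P \<in> Y a b"
  shows "fst ` peak_points P = {e. e < b \<and> hook_path a b P ! (a + e)}"
proof (intro set_eqI)
  fix e
  show "e \<in> fst ` peak_points P \<longleftrightarrow> e \<in> {e. e < b \<and> hook_path a b P ! (a + e)}"
    using peak_abscissae_subset[OF P] nth_hook_path_high[of e b a P] by (cases "e < b") auto
qed

lemma peak_heights_from_hook_path:
  assumes P: "P \<in> Y a b"
  shows "snd ` peak_points P = {n. 1 \<le> n \<and> n \<le> a \<and> \<not> hook_path a b P ! (a - n)}"
proof (intro set_eqI)
  fix n
  show "n \<in> snd ` peak_points P \<longleftrightarrow> n \<in> {n. 1 \<le> n \<and> n \<le> a \<and> \<not> hook_path a b P ! (a - n)}"
    using peak_heights_subset[OF P] nth_hook_path_low[of "a - n" a b P]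
    by (cases "1 \<le> n \<and> n \<le> a") auto
qed

lemma inj_on_hook_path: "inj_on (hook_path a b) (Y a b)"
proof (rule inj_onI)
  fix P P' assume P: "P \<in> Y a b" and P': "P' \<in> Y a b" and eq: "hook_path a b P = hook_path a b P'"
  have "fst ` peak_points P = fst ` peak_points P'" "snd ` peak_points P = snd ` peak_points P'"
    using peak_abscissae_from_hook_path[OF P] peak_abscissae_from_hook_path[OF P']
      peak_heights_from_hook_path[OF P] peak_heights_from_hook_path[OF P'] eq by simp_all
  then have "peak_points P = peak_points P'"
    using peak_points_eq_rank_pairs[of P] peak_points_eq_rank_pairs[of P'] by simp
  then show "P = P'" using inj_onD[OF peak_points_inj_on_Y] P P' by blast
qed

lemma finite_Y: "finite (Y a b)"
proof -
  have "Y a b \<subseteq> {xs. set xs \<subseteq> UNIV \<and> length xs = a + b}" unfolding Y_def by auto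
  then show ?thesis using finite_lists_length_eq[of "UNIV :: bool set" "a + b"] finite_subset by auto
qed

lemma bij_betw_hook_path: "bij_betw (hook_path a b) (Y a b) (Y a b)"
proof -
  have "hook_path a b ` Y a b \<subseteq> Y a b" using hook_path_in_Y by blast
  moreover have "card (hook_path a b ` Y a b) = card (Y a b)" by (rule card_image[OF inj_on_hook_path])
  ultimately have "hook_path a b ` Y a b = Y a b" using card_subset_eq[OF finite_Y] by blast
  then show ?thesis unfolding bij_betw_def using inj_on_hook_path by blast
qed

lemma hd_star_hook_path:
  assumes P: "P \<in> Y a b"
  shows "hd_star (hook_path a b P) = PeakStar P"
proof -
  let ?Q = "hook_path a b P"
  have "?Q \<noteq> [] \<and> hd ?Q \<longleftrightarrow> P \<noteq> [] \<and> last P"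
  proof (cases "a = 0")
    case True
    then have "True \<notin> set P" using Y_counts[OF P] count_list_0_iff by metis
    then have "\<not> (P \<noteq> [] \<and> last P)" using last_in_set by metis
    moreover have "fst ` peak_points P = {}" using peak_points_bounds[OF P] True by fastforce
    then have "\<not> (?Q \<noteq> [] \<and> hd ?Q)"
      using nth_hook_path_high[of 0 b 0 P] True
      by (auto simp: hd_conv_nth simp flip: length_greater_0_conv)
    ultimately show ?thesis by blast
  next
    case False
    then have "?Q \<noteq> [] \<and> hd ?Q \<longleftrightarrow> a \<notin> snd ` peak_points P"
      using nth_hook_path_low[of 0 a b P] hd_conv_nth[of ?Q] by (auto simp: length_0_conv[symmetric])
    then show ?thesis using last_iff_no_top_peak[OF P] False by simp
  qed
  moreover have "length ?Q = length P" using Y_counts[OF P] by simp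
  ultimately show ?thesis
    unfolding PeakStar_def Peak_snoc_False hd_star_def hd_set_hook_path[OF P] by auto
qed

theorem mainTheorem10:
  fixes a b :: nat
  shows "\<exists>g. bij_betw g (Y a b) (Y a b) \<and>
           (\<forall>P \<in> Y a b. Peak P = hd_set (g P) \<and> PeakStar P = hd_star (g P))"
proof (intro exI[of _ "hook_path a b"] conjI ballI)
  show "bij_betw (hook_path a b) (Y a b) (Y a b)" by (rule bij_betw_hook_path)
next
  fix P assume "P \<in> Y a b"
  then show "Peak P = hd_set (hook_path a b P)" "PeakStar P = hd_star (hook_path a b P)"
    using hd_set_hook_path hd_star_hook_path by simp_all
qed

end
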